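(* Let $g:\mathbb{R}\to\mathbb{R}$ have the property that every bounded interval $I$ admits a modulus $\omega=\omega_I$ with $$\int_0^1\frac{\omega(t)}{t}\,dt<\infty$$ such that $g|_I$ is semi-convex on $I$ with the modulus $\omega$. Then there is a separately convex function $f:\mathbb{R}^2\to\mathbb{R}$ such that $f(u,u)=g(u)$ for each $u\in\mathbb{R}$.
   Context: A function $f:\mathbb{R}^2\to\mathbb{R}$ is called separately convex if it is convex on every line parallel to a coordinate axis. A modulus is a non-decreasing function $\omega:[0,\infty)\to[0,\infty)$ with $\lim_{t\to0+}\omega(t)=0$. A real function $g$ is semi-convex with modulus $\omega$ on an interval $I$ if $g(\alpha x+(1-\alpha)y)\le\alpha g(x)+(1-\alpha)g(y)+\alpha(1-\alpha)|x-y|\,\omega(|x-y|)$ for all $x,y\in I$ and $\alpha\in(0,1)$. *)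

theory Defs
  imports "HOL-Analysis.Analysis"
begin

definition modulus :: "(real \<Rightarrow> real) \<Rightarrow> bool" where
  "modulus \<omega> \<longleftrightarrow> mono_on {0..} \<omega> \<and> (\<forall>t\<ge>0. \<omega> t \<ge> 0) \<and> (\<omega> \<longlongrightarrow> 0) (at_right 0)"

definition semi_convex_on :: "real set \<Rightarrow> (real \<Rightarrow> real) \<Rightarrow> (real \<Rightarrow> real) \<Rightarrow> bool" where
  "semi_convex_on I \<omega> g \<longleftrightarrow>
     (\<forall>x\<in>I. \<forall>y\<in>I. \<forall>\<alpha>\<in>{0<..<1}.
        g (\<alpha> * x + (1 - \<alpha>) * y)
          \<le> \<alpha> * g x + (1 - \<alpha>) * g y + \<alpha> * (1 - \<alpha>) * \<bar>x - y\<bar> * \<omega> \<bar>x - y\<bar>)"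

definition separately_convex :: "(real \<times> real \<Rightarrow> real) \<Rightarrow> bool" where
  "separately_convex f \<longleftrightarrow>
     (\<forall>y. convex_on UNIV (\<lambda>x. f (x, y))) \<and> (\<forall>x. convex_on UNIV (\<lambda>y. f (x, y)))"

end

theory Submission
  imports Defs
begin

text \<open>For every \<open>u0\<close> we build a function \<open>S\<^sub>u\<^sub>0\<close> on \<open>\<real>\<^sup>2\<close> that is symmetric and
  convex in each variable, touches \<open>g\<close> at \<open>(u0, u0)\<close> and stays below \<open>g\<close> on the diagonal;
  then \<open>f = sup\<^sub>u\<^sub>0 S\<^sub>u\<^sub>0\<close> works. \<open>S\<^sub>u\<^sub>0\<close> is the supporting line of \<open>g\<close> at \<open>u0\<close>, whose error
  on the diagonal is \<open>\<bar>t\<bar> \<omega>(2\<bar>t\<bar>)\<close> for \<open>t = u - u0\<close>, plus three separately convex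
  corrections that are nonpositive on the diagonal. The first sums over the dyadic scales
  \<open>r = 2\<^sup>-\<^sup>k\<close> the kernels \<open>r K(a/r, b/r)\<close>, where \<open>K(a, b) = max (-clip a clip b) (2\<bar>a - b\<bar> - 1)\<close>,
  with weights \<open>\<omega>(4r)\<close>; the series converges precisely because of the Dini condition, and on
  the diagonal it absorbs the error for \<open>\<bar>t\<bar> \<le> 1\<close>. The second, \<open>-\<lambda> (x - u0) (y - u0)\<close>,
  absorbs it for larger \<open>\<bar>t\<bar>\<close>. The third has as diagonal minus a rapidly growing convex
  function \<open>\<gamma>\<close> and is corrected by the tangent of \<open>\<gamma>\<close> at \<open>u0\<close>; the resulting Bregman divergence
  of \<open>\<gamma>\<close> beats the growth in \<open>u0\<close> of the other terms, so the supremum is finite.\<close>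

section \<open>Operations preserving convexity\<close>

lemma convex_on_max:
  assumes "convex_on S f" "convex_on S g"
  shows "convex_on S (\<lambda>x. max (f x) (g x))"
proof (rule convex_onI)
  show "convex S" using assms(1) by (rule convex_on_imp_convex)
  fix t :: real and x y assume t: "0 < t" "t < 1" and xy: "x \<in> S" "y \<in> S"
  have "f ((1 - t) *\<^sub>R x + t *\<^sub>R y) \<le> (1 - t) * f x + t * f y"
    "g ((1 - t) *\<^sub>R x + t *\<^sub>R y) \<le> (1 - t) * g x + t * g y"
    using t xy by (auto intro: convex_onD[OF assms(1)] convex_onD[OF assms(2)])
  moreover have "(1 - t) * f x + t * f y \<le> (1 - t) * max (f x) (g x) + t * max (f y) (g y)"
    "(1 - t) * g x + t * g y \<le> (1 - t) * max (f x) (g x) + t * max (f y) (g y)"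
    using t by (intro add_mono mult_left_mono; simp)+
  ultimately show "max (f ((1 - t) *\<^sub>R x + t *\<^sub>R y)) (g ((1 - t) *\<^sub>R x + t *\<^sub>R y))
      \<le> (1 - t) * max (f x) (g x) + t * max (f y) (g y)"
    by linarith
qed

lemma convex_on_suminf:
  assumes "\<And>k. convex_on S (f k)" and "\<And>x. x \<in> S \<Longrightarrow> summable (\<lambda>k. f k x)"
  shows "convex_on S (\<lambda>x. \<Sum>k. f k x)"
proof (rule convex_onI)
  show "convex S" using assms(1) by (rule convex_on_imp_convex)
  fix t :: real and x y assume t: "0 < t" "t < 1" and xy: "x \<in> S" "y \<in> S"
  have "(\<Sum>k. f k ((1 - t) *\<^sub>R x + t *\<^sub>R y)) \<le> (\<Sum>k. (1 - t) * f k x + t * f k y)"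
  proof (rule suminf_le)
    have "(1 - t) *\<^sub>R x + t *\<^sub>R y \<in> S"
      using t xy convex_on_imp_convex[OF assms(1)] by (simp add: convex_alt)
    then show "summable (\<lambda>k. f k ((1 - t) *\<^sub>R x + t *\<^sub>R y))" by (rule assms(2))
    show "summable (\<lambda>k. (1 - t) * f k x + t * f k y)"
      using xy assms(2) by (intro summable_add summable_mult)
  qed (use t xy in \<open>auto intro: convex_onD[OF assms(1)]\<close>)
  also have "\<dots> = (1 - t) * (\<Sum>k. f k x) + t * (\<Sum>k. f k y)"
    using xy assms(2) by (simp add: suminf_add[symmetric] suminf_mult summable_mult)
  finally show "(\<Sum>k. f k ((1 - t) *\<^sub>R x + t *\<^sub>R y)) \<le> (1 - t) * (\<Sum>k. f k x) + t * (\<Sum>k. f k y)" .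
qed

lemma convex_on_SUP:
  assumes "\<And>i. convex_on S (f i)" and "\<And>x. x \<in> S \<Longrightarrow> bdd_above (range (\<lambda>i. f i x))"
  shows "convex_on S (\<lambda>x. SUP i. f i x)"
proof (rule convex_onI)
  show "convex S" using assms(1) by (rule convex_on_imp_convex)
  fix t :: real and x y assume t: "0 < t" "t < 1" and xy: "x \<in> S" "y \<in> S"
  show "(SUP i. f i ((1 - t) *\<^sub>R x + t *\<^sub>R y)) \<le> (1 - t) * (SUP i. f i x) + t * (SUP i. f i y)"
  proof (rule cSUP_least)
    fix i
    have "f i ((1 - t) *\<^sub>R x + t *\<^sub>R y) \<le> (1 - t) * f i x + t * f i y"
      using t xy by (intro convex_onD[OF assms(1)]) auto
    also have "\<dots> \<le> (1 - t) * (SUP i. f i x) + t * (SUP i. f i y)"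
      using t xy by (intro add_mono mult_left_mono cSUP_upper assms(2)) auto
    finally show "f i ((1 - t) *\<^sub>R x + t *\<^sub>R y) \<le> (1 - t) * (SUP i. f i x) + t * (SUP i. f i y)" .
  qed simp
qed

lemma convex_on_compose_affine:
  fixes f :: "'a::real_vector \<Rightarrow> real"
  assumes "convex_on UNIV f"
  shows "convex_on UNIV (\<lambda>x. f (c *\<^sub>R x + a))"
proof (rule convex_onI)
  fix t :: real and x y :: 'a
  assume t: "0 < t" "t < 1"
  have "c *\<^sub>R ((1 - t) *\<^sub>R x + t *\<^sub>R y) + a = (1 - t) *\<^sub>R (c *\<^sub>R x + a) + t *\<^sub>R (c *\<^sub>R y + a)"
    by (simp add: algebra_simps flip: scaleR_add_left)
  then show "f (c *\<^sub>R ((1 - t) *\<^sub>R x + t *\<^sub>R y) + a) \<le> (1 - t) * f (c *\<^sub>R x + a) + t * f (c *\<^sub>R y + a)"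
    using t by (simp add: convex_onD[OF assms])
qed simp

lemma convex_on_affine_real: "convex_on UNIV (\<lambda>x::real. c * x + a)"
  by (rule convex_onI) (auto simp: algebra_simps)

lemma separately_convex_supremum:
  fixes S :: "'i \<Rightarrow> real \<Rightarrow> real \<Rightarrow> real"
  assumes convex: "\<And>i y. convex_on UNIV (\<lambda>x. S i x y)"
    and commute: "\<And>i x y. S i x y = S i y x"
    and bdd: "\<And>x y. bdd_above (range (\<lambda>i. S i x y))"
  shows "separately_convex (\<lambda>(x, y). SUP i. S i x y)"
proof -
  have "convex_on UNIV (\<lambda>x. SUP i. S i x y)" for y
    by (intro convex_on_SUP convex bdd)
  moreover have "(\<lambda>x. SUP i. S i y x) = (\<lambda>x. SUP i. S i x y)" for y
    by (simp add: commute)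
  ultimately show ?thesis by (simp add: separately_convex_def)
qed

section \<open>A truncated product kernel\<close>

definition clip :: "real \<Rightarrow> real" where "clip a = max (-1) (min 1 a)"

definition clip_kernel :: "real \<Rightarrow> real \<Rightarrow> real" where
  "clip_kernel a b = max (- (clip a * clip b)) (2 * \<bar>a - b\<bar> - 1)"

lemma abs_clip_le: "\<bar>clip a\<bar> \<le> 1"
  by (simp add: clip_def)

lemma neg_clip_mult_le: "- (clip a * c) \<le> max (- (a * c)) (- \<bar>c\<bar>)" if "\<bar>c\<bar> \<le> 1"
  using that mult_right_mono[of 1 a "-c"] mult_right_mono[of a "-1" c] unfolding clip_def
  by (cases "a \<le> -1"; cases "a \<ge> 1"; cases "c \<ge> 0") (auto simp: le_max_iff_disj)

lemma neg_mult_clip_le: "- (a * clip b) \<le> max (- (clip a * clip b)) (2 * \<bar>a - b\<bar> - 1)"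
proof -
  have c: "\<bar>clip b\<bar> \<le> 1" "clip b < 0 \<Longrightarrow> b < 0" "clip b > 0 \<Longrightarrow> b > 0"
    by (auto simp: clip_def)
  consider "\<bar>a\<bar> \<le> 1" | "a > 1" | "a < -1" by linarith
  then show ?thesis
  proof cases
    case 1
    then show ?thesis by (simp add: clip_def)
  next
    case 2
    then have ca: "clip a = 1" by (simp add: clip_def)
    show ?thesis
    proof (cases "clip b \<ge> 0")
      case True
      then have "- (a * clip b) \<le> - clip b" using 2 mult_right_mono[of 1 a "clip b"] by linarith
      then show ?thesis by (simp add: ca)
    next
      case False
      have "- (a * clip b) \<le> a" using 2 c(1) mult_left_mono[of "- clip b" 1 a] by simp
      moreover have "\<bar>a - b\<bar> = a - b" "b < 0" using 2 False c(2) by auto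
      ultimately have "- (a * clip b) \<le> 2 * \<bar>a - b\<bar> - 1" using 2 by argo
      then show ?thesis by (rule max.coboundedI2)
    qed
  next
    case 3
    then have ca: "clip a = -1" by (simp add: clip_def)
    show ?thesis
    proof (cases "clip b \<le> 0")
      case True
      then have "- (a * clip b) \<le> clip b" using 3 mult_right_mono[of a "-1" "- clip b"] by linarith
      then show ?thesis by (simp add: ca)
    next
      case False
      have "- (a * clip b) \<le> - a" using 3 c(1) mult_left_mono[of "clip b" 1 "- a"] by simp
      moreover have "\<bar>a - b\<bar> = b - a" "b > 0" using 3 False c(3) by auto
      ultimately have "- (a * clip b) \<le> 2 * \<bar>a - b\<bar> - 1" using 3 by argo
      then show ?thesis by (rule max.coboundedI2)
    qed
  qed
qed

text \<open>For fixed \<open>b\<close> the kernel is a maximum of convex functions of \<open>a\<close>, which its symmetric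
  definition hides.\<close>
lemma clip_kernel_eq_max_affine:
  "clip_kernel a b = max (max (- (clip b * a)) (- \<bar>clip b\<bar>)) (2 * \<bar>a - b\<bar> - 1)"
proof -
  have "\<bar>clip a * clip b\<bar> \<le> \<bar>clip b\<bar>"
    using abs_clip_le[of a] mult_right_mono[of "\<bar>clip a\<bar>" 1 "\<bar>clip b\<bar>"] by (simp add: abs_mult)
  then show ?thesis
    unfolding clip_kernel_def
    using neg_clip_mult_le[OF abs_clip_le, of a b] neg_mult_clip_le[of a b]
    by (auto simp: max_def mult.commute)
qed

lemma convex_clip_kernel: "convex_on UNIV (\<lambda>a. clip_kernel a b)"
proof -
  have "convex_on UNIV (\<lambda>a. max (max (- clip b * a + 0) (- \<bar>clip b\<bar>)) (2 * dist b a + (- 1)))"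
    by (intro convex_on_max convex_on_affine_real convex_on_add convex_on_cmul convex_on_dist)
      (auto simp: convex_on_const)
  then show ?thesis
    by (simp add: clip_kernel_eq_max_affine dist_real_def abs_minus_commute)
qed

lemma clip_kernel_commute: "clip_kernel a b = clip_kernel b a"
  by (simp add: clip_kernel_def abs_minus_commute mult.commute)

lemma clip_kernel_diag: "clip_kernel t t = - min (t\<^sup>2) 1"
  using mult_mono[of 1 t 1 t] mult_mono[of 1 "- t" 1 "- t"] unfolding clip_kernel_def clip_def
  by (cases "t \<le> -1"; cases "t \<ge> 1") (auto simp: power2_eq_square abs_square_le_1 min_def)

lemma clip_kernel_lower: "- 1 \<le> clip_kernel a b"
  unfolding clip_kernel_def by (simp add: le_max_iff_disj)

lemma clip_kernel_upper: "clip_kernel a b \<le> 1 + 2 * \<bar>a - b\<bar>"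
proof -
  have "\<bar>clip a * clip b\<bar> \<le> 1"
    using abs_clip_le[of a] abs_clip_le[of b] by (simp add: abs_mult mult_le_one)
  then have "- (clip a * clip b) \<le> 1" by (simp add: abs_le_iff)
  then show ?thesis
    unfolding clip_kernel_def using abs_ge_zero[of "a - b"] by argo
qed

definition scaled_clip_kernel :: "real \<Rightarrow> real \<Rightarrow> real \<Rightarrow> real" where
  "scaled_clip_kernel r a b = r * clip_kernel (a / r) (b / r)"

lemma convex_scaled_clip_kernel:
  assumes "r > 0"
  shows "convex_on UNIV (\<lambda>a. scaled_clip_kernel r a b)"
  unfolding scaled_clip_kernel_def
  using assms convex_on_compose_affine[OF convex_clip_kernel, of "1 / r" 0 "b / r"]
  by (intro convex_on_cmul) auto

lemma scaled_clip_kernel_commute: "scaled_clip_kernel r a b = scaled_clip_kernel r b a"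
  by (simp add: scaled_clip_kernel_def clip_kernel_commute)

lemma scaled_clip_kernel_diag:
  assumes "r > 0"
  shows "scaled_clip_kernel r t t = - min (t\<^sup>2 / r) r"
  using assms by (simp add: scaled_clip_kernel_def clip_kernel_diag min_mult_distrib_left
      field_simps power2_eq_square)

lemma scaled_clip_kernel_abs_le:
  assumes "r > 0"
  shows "\<bar>scaled_clip_kernel r a b\<bar> \<le> r + 2 * \<bar>a - b\<bar>"
proof -
  have "- 1 \<le> clip_kernel (a / r) (b / r)" "clip_kernel (a / r) (b / r) \<le> 1 + 2 * \<bar>a - b\<bar> / r"
    using clip_kernel_lower clip_kernel_upper[of "a / r" "b / r"] assms
    by (auto simp: diff_divide_distrib[symmetric])
  moreover have "0 \<le> \<bar>a - b\<bar> / r" using assms by simp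
  ultimately have "\<bar>clip_kernel (a / r) (b / r)\<bar> \<le> 1 + 2 * \<bar>a - b\<bar> / r"
    by (simp add: abs_le_iff)
  then have "r * \<bar>clip_kernel (a / r) (b / r)\<bar> \<le> r * (1 + 2 * \<bar>a - b\<bar> / r)"
    using assms by (intro mult_left_mono) auto
  then show ?thesis
    using assms by (simp add: scaled_clip_kernel_def abs_mult distrib_left)
qed

section \<open>Dini moduli and the Dini kernel\<close>

definition dini_term :: "(real \<Rightarrow> real) \<Rightarrow> nat \<Rightarrow> real \<Rightarrow> real \<Rightarrow> real" where
  "dini_term \<omega> k a b = 2 * \<omega> (4 * (1/2)^k) * scaled_clip_kernel ((1/2)^k) a b"

definition dini_kernel :: "(real \<Rightarrow> real) \<Rightarrow> real \<Rightarrow> real \<Rightarrow> real" where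
  "dini_kernel \<omega> a b = (\<Sum>k. dini_term \<omega> k a b)"

definition dini_sum :: "(real \<Rightarrow> real) \<Rightarrow> real" where
  "dini_sum \<omega> = (\<Sum>k. \<omega> (4 * (1/2)^k))"

lemma dyadic_bracket:
  fixes t :: real
  assumes "0 < t" "t \<le> 1"
  obtains k where "(1/2)^Suc k < t" "t \<le> (1/2)^k"
proof -
  obtain n where "(1/2::real)^n < t" using real_arch_pow_inv[OF assms(1), of "1/2"] by auto
  then have "\<exists>k. \<not> (1/2::real)^k < t \<and> (1/2)^Suc k < t"
    using assms(2) by (intro exists_least_lemma) auto
  then show ?thesis using that by (auto simp: not_less)
qed

lemma dyadic_shells_disjoint:
  assumes "t \<in> {(1/2::real)^Suc k..<(1/2)^k}" "t \<in> {(1/2::real)^Suc j..<(1/2)^j}"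
  shows "k = j"
proof (rule ccontr)
  assume "k \<noteq> j"
  then have "(1/2::real)^(max k j) \<le> (1/2)^Suc (min k j)"
    by (intro power_decreasing) auto
  then show False using assms by (cases "k \<le> j") (auto simp: max_def min_def)
qed

locale dini_modulus =
  fixes \<omega> :: "real \<Rightarrow> real"
  assumes mono: "mono_on {0..} \<omega>"
    and nonneg: "\<And>t. t \<ge> 0 \<Longrightarrow> \<omega> t \<ge> 0"
    and dini: "set_nn_integral lborel {0<..<1} (\<lambda>t. ennreal (\<omega> t / t)) < \<infinity>"
begin

lemma mono_le: "0 \<le> s \<Longrightarrow> s \<le> t \<Longrightarrow> \<omega> s \<le> \<omega> t"
  by (rule mono_onD[OF mono]) auto

lemma dyadic_shell_le:
  assumes "t \<in> {(1/2)^Suc k..<(1/2)^k}"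
  shows "\<omega> ((1/2)^Suc k) * 2^k \<le> \<omega> t / t"
proof -
  have t: "(1/2)^Suc k \<le> t" "t < (1/2)^k" "0 < t"
    using assms by (auto intro: less_le_trans[of 0 "(1/2::real)^Suc k"])
  have "\<omega> ((1/2)^Suc k) * 2^k = \<omega> ((1/2)^Suc k) / (1/2)^k"
    by (simp add: power_one_over)
  also have "\<dots> \<le> \<omega> t / (1/2)^k"
    using t mono_le[of "(1/2)^Suc k" t] by (intro divide_right_mono) auto
  also have "\<dots> \<le> \<omega> t / t"
    using t nonneg[of t] by (intro divide_left_mono) auto
  finally show ?thesis .
qed

lemma dyadic_shells_le:
  "(\<Sum>k. ennreal (\<omega> ((1/2)^Suc k) * 2^k) * indicator {(1/2::real)^Suc k..<(1/2)^k} t)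
     \<le> ennreal (\<omega> t / t) * indicator {0<..<1} t"
proof (cases "\<exists>k. t \<in> {(1/2::real)^Suc k..<(1/2)^k}")
  case False
  then have "(\<lambda>k. ennreal (\<omega> ((1/2)^Suc k) * 2^k) * indicator {(1/2::real)^Suc k..<(1/2)^k} t) = (\<lambda>k. 0)"
    by (auto simp: indicator_def)
  then show ?thesis by simp
next
  case True
  then obtain k where k: "t \<in> {(1/2::real)^Suc k..<(1/2)^k}" by auto
  have "(\<Sum>j. ennreal (\<omega> ((1/2)^Suc j) * 2^j) * indicator {(1/2::real)^Suc j..<(1/2)^j} t)
      = (\<Sum>j\<in>{k}. ennreal (\<omega> ((1/2)^Suc j) * 2^j) * indicator {(1/2::real)^Suc j..<(1/2)^j} t)"
    by (rule suminf_finite) (use dyadic_shells_disjoint k in \<open>auto simp: indicator_def\<close>)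
  also have "\<dots> \<le> ennreal (\<omega> t / t)"
    using dyadic_shell_le[OF k] k by (simp add: ennreal_leI del: power_Suc)
  also have "\<dots> = ennreal (\<omega> t / t) * indicator {0<..<1} t"
    using k power_le_one[of "1/2::real" k] less_le_trans[of 0 "(1/2::real)^Suc k" t] by auto
  finally show ?thesis .
qed

lemma nn_integral_dyadic_shell:
  "(\<integral>\<^sup>+ t. ennreal (\<omega> ((1/2)^Suc k) * 2^k) * indicator {(1/2::real)^Suc k..<(1/2)^k} t \<partial>lborel)
     = ennreal (\<omega> ((1/2)^Suc k) / 2)"
proof -
  have "(\<integral>\<^sup>+ t. ennreal (\<omega> ((1/2)^Suc k) * 2^k) * indicator {(1/2::real)^Suc k..<(1/2)^k} t \<partial>lborel)
      = ennreal (\<omega> ((1/2)^Suc k) * 2^k) * ennreal ((1/2)^Suc k)"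
    by (simp add: nn_integral_cmult_indicator)
  also have "\<dots> = ennreal (\<omega> ((1/2)^Suc k) / 2)"
    using nonneg[of "(1/2)^Suc k"] by (simp add: power_one_over flip: ennreal_mult)
  finally show ?thesis .
qed

text \<open>On each shell \<open>[2\<^sup>-\<^sup>k\<^sup>-\<^sup>1, 2\<^sup>-\<^sup>k)\<close> the integrand \<open>\<omega>(t)/t\<close> is at least \<open>2\<^sup>k \<omega>(2\<^sup>-\<^sup>k\<^sup>-\<^sup>1)\<close>,
  so the Dini integral dominates \<open>\<Sum>\<^sub>k \<omega>(2\<^sup>-\<^sup>k\<^sup>-\<^sup>1)/2\<close>.\<close>
lemma summable_dyadic: "summable (\<lambda>k. \<omega> ((1/2)^k))"
proof -
  have "(\<Sum>k. ennreal (\<omega> ((1/2)^Suc k) / 2))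
      = (\<integral>\<^sup>+ t. (\<Sum>k. ennreal (\<omega> ((1/2)^Suc k) * 2^k) * indicator {(1/2::real)^Suc k..<(1/2)^k} t) \<partial>lborel)"
    by (simp add: nn_integral_suminf nn_integral_dyadic_shell del: power_Suc)
  also have "\<dots> \<le> set_nn_integral lborel {0<..<1} (\<lambda>t. ennreal (\<omega> t / t))"
    by (rule nn_integral_mono) (rule dyadic_shells_le)
  also have "\<dots> < \<infinity>" by (rule dini)
  finally have "summable (\<lambda>k. \<omega> ((1/2)^Suc k) / 2)"
    by (intro summable_suminf_not_top) (simp_all add: nonneg)
  then have "summable (\<lambda>k. \<omega> ((1/2)^Suc k))"
    using summable_mult[of _ 2] by simp
  then show ?thesis by (rule summable_Suc_iff[THEN iffD1])
qed

lemma summable_dini_weights: "summable (\<lambda>k. \<omega> (4 * (1/2)^k))"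
proof -
  have "(\<lambda>k. \<omega> (4 * (1/2)^(k + 2))) = (\<lambda>k. \<omega> ((1/2)^k))"
    by (simp add: power_add)
  then show ?thesis
    using summable_dyadic summable_iff_shift[of "\<lambda>k. \<omega> (4 * (1/2)^k)" 2] by simp
qed

lemma dini_sum_nonneg: "dini_sum \<omega> \<ge> 0"
  unfolding dini_sum_def by (rule suminf_nonneg[OF summable_dini_weights]) (simp add: nonneg)

lemma dini_term_abs_le: "\<bar>dini_term \<omega> k a b\<bar> \<le> \<omega> (4 * (1/2)^k) * (2 + 4 * \<bar>a - b\<bar>)"
proof -
  have "\<bar>scaled_clip_kernel ((1/2)^k) a b\<bar> \<le> 1 + 2 * \<bar>a - b\<bar>"
    using scaled_clip_kernel_abs_le[of "(1/2)^k" a b] power_le_one[of "1/2::real" k] by simp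
  then have "2 * \<omega> (4 * (1/2)^k) * \<bar>scaled_clip_kernel ((1/2)^k) a b\<bar>
      \<le> 2 * \<omega> (4 * (1/2)^k) * (1 + 2 * \<bar>a - b\<bar>)"
    by (intro mult_left_mono) (simp_all add: nonneg)
  then show ?thesis by (simp add: dini_term_def abs_mult nonneg algebra_simps)
qed

lemma summable_dini_term: "summable (\<lambda>k. dini_term \<omega> k a b)"
  by (rule summable_comparison_test'[OF summable_mult2[OF summable_dini_weights]])
    (use dini_term_abs_le in simp)

lemma dini_kernel_le: "dini_kernel \<omega> a b \<le> (2 + 4 * \<bar>a - b\<bar>) * dini_sum \<omega>"
proof -
  have "dini_kernel \<omega> a b \<le> (\<Sum>k. \<omega> (4 * (1/2)^k) * (2 + 4 * \<bar>a - b\<bar>))"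
    unfolding dini_kernel_def
    by (rule suminf_le[OF _ summable_dini_term summable_mult2[OF summable_dini_weights]])
      (use dini_term_abs_le abs_le_iff in blast)
  also have "\<dots> = (2 + 4 * \<bar>a - b\<bar>) * dini_sum \<omega>"
    unfolding dini_sum_def using suminf_mult2[OF summable_dini_weights, of "2 + 4 * \<bar>a - b\<bar>"]
    by (metis (no_types) mult.commute)
  finally show ?thesis .
qed

lemma convex_dini_kernel: "convex_on UNIV (\<lambda>a. dini_kernel \<omega> a b)"
  unfolding dini_kernel_def dini_term_def
  by (intro convex_on_suminf convex_on_cmul convex_scaled_clip_kernel summable_dini_term[unfolded dini_term_def])
    (simp_all add: nonneg)

lemma dini_kernel_commute: "dini_kernel \<omega> a b = dini_kernel \<omega> b a"
  by (simp add: dini_kernel_def dini_term_def scaled_clip_kernel_commute)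

lemma dini_kernel_0: "dini_kernel \<omega> 0 0 = 0"
  by (simp add: dini_kernel_def dini_term_def scaled_clip_kernel_diag)

lemma dini_term_diag: "dini_term \<omega> k t t = - 2 * \<omega> (4 * (1/2)^k) * min (t\<^sup>2 / (1/2)^k) ((1/2)^k)"
  by (simp add: dini_term_def scaled_clip_kernel_diag)

lemma dini_term_diag_nonpos: "dini_term \<omega> k t t \<le> 0"
  by (simp add: dini_term_diag nonneg)

lemma dini_kernel_diag_le_term: "dini_kernel \<omega> t t \<le> dini_term \<omega> j t t"
proof -
  have "(\<Sum>k\<in>{j}. - dini_term \<omega> k t t) \<le> (\<Sum>k. - dini_term \<omega> k t t)"
    by (rule sum_le_suminf) (use summable_minus[OF summable_dini_term] dini_term_diag_nonpos in auto)
  then show ?thesis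
    unfolding dini_kernel_def using summable_dini_term by (simp add: suminf_minus)
qed

lemma dini_kernel_diag_nonpos: "dini_kernel \<omega> t t \<le> 0"
  using dini_kernel_diag_le_term[of t 0] dini_term_diag_nonpos[of 0 t] by linarith

text \<open>The single term of scale \<open>2\<^sup>-\<^sup>k\<^sup>-\<^sup>1 < \<bar>t\<bar> \<le> 2\<^sup>-\<^sup>k\<close> already gives the bound.\<close>
lemma dini_kernel_diag_le:
  assumes "\<bar>t\<bar> \<le> 1"
  shows "dini_kernel \<omega> t t \<le> - \<bar>t\<bar> * \<omega> (2 * \<bar>t\<bar>)"
proof (cases "t = 0")
  case True
  then show ?thesis using dini_kernel_diag_nonpos by simp
next
  case False
  then obtain k where k: "(1/2)^Suc k < \<bar>t\<bar>" "\<bar>t\<bar> \<le> (1/2)^k"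
    using dyadic_bracket[of "\<bar>t\<bar>"] assms by auto
  have "t\<^sup>2 / (1/2)^Suc k \<ge> (1/2)^Suc k"
    using k(1) abs_le_square_iff[of "(1/2)^Suc k" t]
    by (simp add: field_simps power2_eq_square del: power_Suc)
  then have "dini_kernel \<omega> t t \<le> - 2 * \<omega> (4 * (1/2)^Suc k) * (1/2)^Suc k"
    using dini_kernel_diag_le_term[of t "Suc k"] by (simp add: dini_term_diag del: power_Suc)
  also have "\<dots> = - \<omega> (2 * (1/2)^k) * (1/2)^k"
    by simp
  also have "\<dots> \<le> - \<omega> (2 * \<bar>t\<bar>) * \<bar>t\<bar>"
    using k(2) mono_le[of "2 * \<bar>t\<bar>" "2 * (1/2)^k"] nonneg[of "2 * \<bar>t\<bar>"]
    by (simp add: mult_mono)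
  finally show ?thesis by (simp add: mult.commute)
qed

end

section \<open>Bregman divergences of hinge functions\<close>

definition bregman :: "(real \<Rightarrow> real) \<Rightarrow> (real \<Rightarrow> real) \<Rightarrow> real \<Rightarrow> real \<Rightarrow> real" where
  "bregman f f' u v = f u - f v - f' v * (u - v)"

definition pos_sq :: "real \<Rightarrow> real" where
  "pos_sq v = (max v 0)\<^sup>2"

definition hinge_sq :: "nat \<Rightarrow> real \<Rightarrow> real" where
  "hinge_sq k u = pos_sq (u - k) + pos_sq (- u - k)"

definition hinge_sq_deriv :: "nat \<Rightarrow> real \<Rightarrow> real" where
  "hinge_sq_deriv k u = 2 * max (u - k) 0 - 2 * max (- u - k) 0"

definition corner_kernel :: "real \<Rightarrow> real \<Rightarrow> real" where
  "corner_kernel a b = - (a * b) + max (- a) 0 * max (- b) 0"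

definition hinge_kernel :: "nat \<Rightarrow> real \<Rightarrow> real \<Rightarrow> real" where
  "hinge_kernel k x y = corner_kernel (x - k) (y - k) + corner_kernel (- x - k) (- y - k)"

lemma bregman_pos_sq_nonneg: "bregman pos_sq (\<lambda>v. 2 * max v 0) v w \<ge> 0"
proof (cases "w \<le> 0")
  case True
  then show ?thesis by (simp add: bregman_def pos_sq_def)
next
  case False
  then have "bregman pos_sq (\<lambda>v. 2 * max v 0) v w = (if v \<ge> 0 then (v - w)\<^sup>2 else w * (w - 2 * v))"
    by (simp add: bregman_def pos_sq_def power2_eq_square algebra_simps)
  then show ?thesis using False by simp
qed

lemma bregman_hinge_sq:
  "bregman (hinge_sq k) (hinge_sq_deriv k) u v =
     bregman pos_sq (\<lambda>v. 2 * max v 0) (u - k) (v - k) + bregman pos_sq (\<lambda>v. 2 * max v 0) (- u - k) (- v - k)"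
  by (simp add: bregman_def hinge_sq_def hinge_sq_deriv_def algebra_simps)

lemma bregman_hinge_sq_nonneg: "bregman (hinge_sq k) (hinge_sq_deriv k) u v \<ge> 0"
  by (simp add: bregman_hinge_sq bregman_pos_sq_nonneg)

lemma hinge_sq_eq_0: "\<bar>u\<bar> \<le> k \<Longrightarrow> hinge_sq k u = 0"
  by (simp add: hinge_sq_def pos_sq_def)

lemma hinge_sq_deriv_eq_0: "\<bar>u\<bar> \<le> k \<Longrightarrow> hinge_sq_deriv k u = 0"
  by (simp add: hinge_sq_deriv_def)

lemma bregman_hinge_sq_outward:
  assumes "\<bar>v\<bar> \<le> k" "k + 1 \<le> \<bar>u\<bar>"
  shows "1 \<le> bregman (hinge_sq k) (hinge_sq_deriv k) u v"
proof -
  have "1 \<le> (\<bar>u\<bar> - k)\<^sup>2"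
    using assms(2) mult_mono[of 1 "\<bar>u\<bar> - k" 1 "\<bar>u\<bar> - k"] by (simp add: power2_eq_square)
  also have "\<dots> = hinge_sq k u"
    using assms by (cases "u \<ge> 0") (auto simp: hinge_sq_def pos_sq_def)
  finally show ?thesis
    using assms by (simp add: bregman_def hinge_sq_eq_0 hinge_sq_deriv_eq_0)
qed

lemma bregman_hinge_sq_inward:
  assumes "\<bar>v\<bar> \<le> k" "k + 1 \<le> \<bar>u\<bar>"
  shows "1 \<le> bregman (hinge_sq k) (hinge_sq_deriv k) v u"
proof -
  have "bregman (hinge_sq k) (hinge_sq_deriv k) v u = (\<bar>u\<bar> - k) * (\<bar>u\<bar> + k - 2 * sgn u * v)"
    using assms by (cases "u \<ge> 0")
      (auto simp: bregman_def hinge_sq_eq_0 hinge_sq_def hinge_sq_deriv_def pos_sq_def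
        power2_eq_square algebra_simps)
  moreover have "1 * 1 \<le> (\<bar>u\<bar> - k) * (\<bar>u\<bar> + k - 2 * sgn u * v)"
    using assms by (intro mult_mono) (auto simp: sgn_if)
  ultimately show ?thesis by simp
qed

lemma convex_corner_kernel: "convex_on UNIV (\<lambda>a. corner_kernel a b)"
proof -
  have "corner_kernel a b = (if b \<ge> 0 then - b * a + 0 else max (- b * a + 0) (0 * a + 0))" for a
    using mult_nonneg_nonpos[of a b] mult_nonpos_nonpos[of a b]
    by (cases "a \<ge> 0") (auto simp: corner_kernel_def max_def mult.commute)
  then show ?thesis
    using convex_on_affine_real[of "- b" 0]
      convex_on_max[OF convex_on_affine_real[of "- b" 0] convex_on_affine_real[of 0 0]]
    by (cases "b \<ge> 0") simp_all
qed

lemma corner_kernel_commute: "corner_kernel a b = corner_kernel b a"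
  by (simp add: corner_kernel_def mult.commute)

lemma corner_kernel_diag: "corner_kernel t t = - pos_sq t"
  by (cases "t \<ge> 0") (auto simp: corner_kernel_def pos_sq_def power2_eq_square)

lemma corner_kernel_eq_0: "a \<le> 0 \<Longrightarrow> b \<le> 0 \<Longrightarrow> corner_kernel a b = 0"
  by (simp add: corner_kernel_def)

lemma convex_hinge_kernel: "convex_on UNIV (\<lambda>x. hinge_kernel k x y)"
  unfolding hinge_kernel_def
  using convex_on_compose_affine[OF convex_corner_kernel, of 1 "- real k"]
    convex_on_compose_affine[OF convex_corner_kernel, of "-1" "- real k"]
  by (intro convex_on_add) simp_all

lemma hinge_kernel_commute: "hinge_kernel k x y = hinge_kernel k y x"
  by (simp add: hinge_kernel_def corner_kernel_commute)

lemma hinge_kernel_diag: "hinge_kernel k u u = - hinge_sq k u"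
  by (simp add: hinge_kernel_def hinge_sq_def corner_kernel_diag)

lemma hinge_kernel_eq_0: "\<bar>x\<bar> \<le> k \<Longrightarrow> \<bar>y\<bar> \<le> k \<Longrightarrow> hinge_kernel k x y = 0"
  by (simp add: hinge_kernel_def corner_kernel_eq_0)

lemma summable_vanishing_beyond:
  fixes f :: "nat \<Rightarrow> real"
  assumes "\<And>k. B \<le> real k \<Longrightarrow> f k = 0"
  shows "summable f"
proof (rule summable_finite[of "{..nat \<lceil>B\<rceil>}"])
  fix k assume "k \<notin> {..nat \<lceil>B\<rceil>}"
  then have "real (nat \<lceil>B\<rceil>) < real k" by (simp only: of_nat_less_iff) simp
  then have "B \<le> real k" using real_nat_ceiling_ge[of B] by linarith
  then show "f k = 0" by (rule assms)
qed simp

definition hinge_series :: "(nat \<Rightarrow> real) \<Rightarrow> real \<Rightarrow> real" where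
  "hinge_series c u = (\<Sum>k. c k * hinge_sq k u)"

definition hinge_series_deriv :: "(nat \<Rightarrow> real) \<Rightarrow> real \<Rightarrow> real" where
  "hinge_series_deriv c u = (\<Sum>k. c k * hinge_sq_deriv k u)"

definition hinge_kernel_series :: "(nat \<Rightarrow> real) \<Rightarrow> real \<Rightarrow> real \<Rightarrow> real" where
  "hinge_kernel_series c x y = (\<Sum>k. c k * hinge_kernel k x y)"

lemma summable_hinge_sq: "summable (\<lambda>k. c k * hinge_sq k u)"
  by (rule summable_vanishing_beyond[of "\<bar>u\<bar>"]) (simp add: hinge_sq_eq_0)

lemma summable_hinge_sq_deriv: "summable (\<lambda>k. c k * hinge_sq_deriv k u)"
  by (rule summable_vanishing_beyond[of "\<bar>u\<bar>"]) (simp add: hinge_sq_deriv_eq_0)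

lemma summable_hinge_kernel: "summable (\<lambda>k. c k * hinge_kernel k x y)"
  by (rule summable_vanishing_beyond[of "max \<bar>x\<bar> \<bar>y\<bar>"]) (simp add: hinge_kernel_eq_0)

lemma convex_hinge_kernel_series:
  assumes "\<And>k. c k \<ge> 0"
  shows "convex_on UNIV (\<lambda>x. hinge_kernel_series c x y)"
  unfolding hinge_kernel_series_def
  by (intro convex_on_suminf convex_on_cmul convex_hinge_kernel assms summable_hinge_kernel)

lemma hinge_kernel_series_commute: "hinge_kernel_series c x y = hinge_kernel_series c y x"
  by (simp add: hinge_kernel_series_def hinge_kernel_commute)

lemma hinge_kernel_series_diag: "hinge_kernel_series c u u = - hinge_series c u"
  using suminf_minus[OF summable_hinge_sq, of c u]
  by (simp add: hinge_kernel_series_def hinge_series_def hinge_kernel_diag)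

lemma bregman_hinge_series:
  "bregman (hinge_series c) (hinge_series_deriv c) u v
     = (\<Sum>k. c k * bregman (hinge_sq k) (hinge_sq_deriv k) u v)"
proof -
  have "(\<Sum>k. c k * bregman (hinge_sq k) (hinge_sq_deriv k) u v)
      = (\<Sum>k. (c k * hinge_sq k u - c k * hinge_sq k v) - c k * hinge_sq_deriv k v * (u - v))"
    by (simp add: bregman_def algebra_simps)
  also have "\<dots> = (\<Sum>k. c k * hinge_sq k u - c k * hinge_sq k v)
      - (\<Sum>k. c k * hinge_sq_deriv k v * (u - v))"
    by (rule suminf_diff[symmetric]) (intro summable_diff summable_hinge_sq summable_mult2 summable_hinge_sq_deriv)+
  also have "\<dots> = hinge_series c u - hinge_series c v - hinge_series_deriv c v * (u - v)"
    unfolding hinge_series_def hinge_series_deriv_def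
    by (simp add: suminf_diff summable_hinge_sq suminf_mult2 summable_hinge_sq_deriv)
  finally show ?thesis by (simp add: bregman_def)
qed

lemma bregman_hinge_series_ge:
  assumes "\<And>k. c k \<ge> 0"
  shows "c j * bregman (hinge_sq j) (hinge_sq_deriv j) u v \<le> bregman (hinge_series c) (hinge_series_deriv c) u v"
proof -
  have "summable (\<lambda>k. c k * bregman (hinge_sq k) (hinge_sq_deriv k) u v)"
    by (rule summable_vanishing_beyond[of "max \<bar>u\<bar> \<bar>v\<bar>"])
      (simp add: bregman_def hinge_sq_eq_0 hinge_sq_deriv_eq_0)
  then have "(\<Sum>k\<in>{j}. c k * bregman (hinge_sq k) (hinge_sq_deriv k) u v)
      \<le> (\<Sum>k. c k * bregman (hinge_sq k) (hinge_sq_deriv k) u v)"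
    by (rule sum_le_suminf) (simp_all add: assms bregman_hinge_sq_nonneg)
  then show ?thesis by (simp add: bregman_hinge_series)
qed

lemma bregman_hinge_series_nonneg:
  assumes "\<And>k. c k \<ge> 0"
  shows "bregman (hinge_series c) (hinge_series_deriv c) u v \<ge> 0"
  using bregman_hinge_series_ge[OF assms, where j = 0] assms[of 0] bregman_hinge_sq_nonneg[of 0]
  by (meson mult_nonneg_nonneg order_trans)

section \<open>Supporting lines of semi-convex functions\<close>

text \<open>A substitute for the right derivative: it lies between every left and every right
  difference quotient, each corrected by the modulus.\<close>
definition support_slope :: "(real \<Rightarrow> real) \<Rightarrow> (real \<Rightarrow> real) \<Rightarrow> real \<Rightarrow> real \<Rightarrow> real" where
  "support_slope g \<omega> hi u0 = (INF \<delta>\<in>{0<..hi - u0}. (g (u0 + \<delta>) - g u0) / \<delta> + \<omega> (2 * \<delta>))"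

locale semiconvex_interval =
  fixes g \<omega> :: "real \<Rightarrow> real" and lo hi :: real
  assumes semiconvex: "semi_convex_on {lo..hi} \<omega> g"
    and mono: "mono_on {0..} \<omega>"
    and nonneg: "\<And>t. t \<ge> 0 \<Longrightarrow> \<omega> t \<ge> 0"
begin

lemma semiconvexD:
  assumes "x \<in> {lo..hi}" "y \<in> {lo..hi}" "0 < \<alpha>" "\<alpha> < 1"
  shows "g (\<alpha> * x + (1 - \<alpha>) * y) \<le> \<alpha> * g x + (1 - \<alpha>) * g y + \<alpha> * (1 - \<alpha>) * \<bar>x - y\<bar> * \<omega> \<bar>x - y\<bar>"
  using semiconvex assms unfolding semi_convex_on_def by auto

lemma semiconvex_three_points:
  assumes "lo \<le> x" "x < z" "z < y" "y \<le> hi"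
  shows "(y - x) * g z \<le> (y - z) * g x + (z - x) * g y + (y - z) * (z - x) * \<omega> (y - x)"
proof -
  define \<alpha> where "\<alpha> = (y - z) / (y - x)"
  have \<alpha>: "\<alpha> * (y - x) = y - z" "(1 - \<alpha>) * (y - x) = z - x"
    using assms by (simp_all add: \<alpha>_def field_simps)
  have "\<alpha> * x + (1 - \<alpha>) * y = y - \<alpha> * (y - x)" by (simp add: algebra_simps)
  then have comb: "\<alpha> * x + (1 - \<alpha>) * y = z" using \<alpha>(1) by simp
  have dist: "\<bar>x - y\<bar> = y - x" using assms by simp
  have "0 < \<alpha>" "\<alpha> < 1" using assms by (simp_all add: \<alpha>_def)
  then have "g (\<alpha> * x + (1 - \<alpha>) * y) \<le> \<alpha> * g x + (1 - \<alpha>) * g y + \<alpha> * (1 - \<alpha>) * \<bar>x - y\<bar> * \<omega> \<bar>x - y\<bar>"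
    using assms by (intro semiconvexD) auto
  then have "g z \<le> \<alpha> * g x + (1 - \<alpha>) * g y + \<alpha> * (1 - \<alpha>) * (y - x) * \<omega> (y - x)"
    by (simp only: comb dist)
  then have "(y - x) * g z \<le> (y - x) * (\<alpha> * g x + (1 - \<alpha>) * g y + \<alpha> * (1 - \<alpha>) * (y - x) * \<omega> (y - x))"
    using assms by (intro mult_left_mono) auto
  also have "\<dots> = (\<alpha> * (y - x)) * g x + ((1 - \<alpha>) * (y - x)) * g y
      + (\<alpha> * (y - x)) * ((1 - \<alpha>) * (y - x)) * \<omega> (y - x)"
    by (simp add: algebra_simps)
  finally show ?thesis by (simp only: \<alpha>)
qed

lemma difference_quotients_le:
  assumes "\<eta> > 0" "\<delta> > 0" "lo \<le> u0 - \<eta>" "u0 + \<delta> \<le> hi"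
  shows "(g u0 - g (u0 - \<eta>)) / \<eta> - \<omega> (2 * \<eta>) \<le> (g (u0 + \<delta>) - g u0) / \<delta> + \<omega> (2 * \<delta>)"
proof -
  have "(\<eta> + \<delta>) * g u0 \<le> \<delta> * g (u0 - \<eta>) + \<eta> * g (u0 + \<delta>) + \<delta> * \<eta> * \<omega> (\<eta> + \<delta>)"
    using semiconvex_three_points[of "u0 - \<eta>" u0 "u0 + \<delta>"] assms by (simp add: add.commute)
  then have "(g u0 - g (u0 - \<eta>)) / \<eta> \<le> (g (u0 + \<delta>) - g u0) / \<delta> + \<omega> (\<eta> + \<delta>)"
    using assms by (simp add: field_simps)
  moreover have "\<omega> (\<eta> + \<delta>) \<le> \<omega> (2 * \<eta>) + \<omega> (2 * \<delta>)"
    using assms nonneg[of "2 * \<eta>"] nonneg[of "2 * \<delta>"]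
      mono_onD[OF mono, of "\<eta> + \<delta>" "2 * \<delta>"] mono_onD[OF mono, of "\<eta> + \<delta>" "2 * \<eta>"]
    by (cases "\<eta> \<le> \<delta>") auto
  ultimately show ?thesis by linarith
qed

context
  fixes u0 assumes u0: "lo < u0" "u0 < hi"
begin

lemma support_slope_le:
  assumes "0 < \<delta>" "u0 + \<delta> \<le> hi"
  shows "support_slope g \<omega> hi u0 \<le> (g (u0 + \<delta>) - g u0) / \<delta> + \<omega> (2 * \<delta>)"
  unfolding support_slope_def
proof (rule cINF_lower)
  have "(g u0 - g lo) / (u0 - lo) - \<omega> (2 * (u0 - lo)) \<le> (g (u0 + \<delta>) - g u0) / \<delta> + \<omega> (2 * \<delta>)"
    if "\<delta> \<in> {0<..hi - u0}" for \<delta>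
    using difference_quotients_le[of "u0 - lo" \<delta> u0] u0 that by auto
  then show "bdd_below ((\<lambda>\<delta>. (g (u0 + \<delta>) - g u0) / \<delta> + \<omega> (2 * \<delta>)) ` {0<..hi - u0})"
    by (intro bdd_belowI2)
qed (use assms in auto)

lemma support_slope_ge:
  assumes "0 < \<eta>" "lo \<le> u0 - \<eta>"
  shows "(g u0 - g (u0 - \<eta>)) / \<eta> - \<omega> (2 * \<eta>) \<le> support_slope g \<omega> hi u0"
  unfolding support_slope_def
  by (rule cINF_greatest) (use u0 assms difference_quotients_le in auto)

lemma support_line_le:
  assumes "u \<in> {lo..hi}"
  shows "g u0 + support_slope g \<omega> hi u0 * (u - u0) - \<bar>u - u0\<bar> * \<omega> (2 * \<bar>u - u0\<bar>) \<le> g u"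
proof -
  consider "u = u0" | "u > u0" | "u < u0" by linarith
  then show ?thesis
  proof cases
    case 1
    then show ?thesis by simp
  next
    case 2
    have "support_slope g \<omega> hi u0 * (u - u0) \<le> ((g u - g u0) / (u - u0) + \<omega> (2 * (u - u0))) * (u - u0)"
      using support_slope_le[of "u - u0"] assms 2 by (intro mult_right_mono) auto
    also have "\<dots> = g u - g u0 + (u - u0) * \<omega> (2 * (u - u0))"
      using 2 by (simp add: field_simps)
    finally show ?thesis using 2 by simp
  next
    case 3
    have "((g u0 - g u) / (u0 - u) - \<omega> (2 * (u0 - u))) * (u0 - u) \<le> support_slope g \<omega> hi u0 * (u0 - u)"
      using support_slope_ge[of "u0 - u"] assms 3 by (intro mult_right_mono) auto
    moreover have "((g u0 - g u) / (u0 - u) - \<omega> (2 * (u0 - u))) * (u0 - u)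
        = g u0 - g u - (u0 - u) * \<omega> (2 * (u0 - u))"
      using 3 by (simp add: field_simps)
    ultimately show ?thesis using 3 by (simp add: algebra_simps)
  qed
qed

end

lemma le_endpoint_values:
  assumes "v \<in> {lo..hi}"
  shows "g v \<le> \<bar>g lo\<bar> + \<bar>g hi\<bar> + (hi - lo) * \<omega> (hi - lo)"
proof (cases "lo < v \<and> v < hi")
  case True
  then have "(hi - lo) * g v \<le> (hi - v) * g lo + (v - lo) * g hi + (hi - v) * (v - lo) * \<omega> (hi - lo)"
    by (intro semiconvex_three_points) auto
  also have "\<dots> \<le> (hi - lo) * \<bar>g lo\<bar> + (hi - lo) * \<bar>g hi\<bar> + (hi - lo) * (hi - lo) * \<omega> (hi - lo)"
  proof (intro add_mono mult_right_mono)
    show "(hi - v) * g lo \<le> (hi - lo) * \<bar>g lo\<bar>" "(v - lo) * g hi \<le> (hi - lo) * \<bar>g hi\<bar>"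
      using True by (intro order_trans[OF mult_left_mono mult_right_mono]; simp)+
    show "(hi - v) * (v - lo) \<le> (hi - lo) * (hi - lo)"
      using True by (intro mult_mono) auto
  qed (use True nonneg[of "hi - lo"] in simp)
  finally show ?thesis
    using True by (simp add: mult.assoc distrib_left[symmetric])
next
  case False
  then have "v = lo \<or> v = hi" using assms by auto
  moreover have "0 \<le> (hi - lo) * \<omega> (hi - lo)" using assms nonneg[of "hi - lo"] by simp
  ultimately show ?thesis
    using abs_ge_self[of "g lo"] abs_ge_self[of "g hi"] by (smt (verit) abs_ge_zero)
qed

lemma bounded_on_interval:
  assumes "lo < hi"
  obtains B where "\<And>v. v \<in> {lo..hi} \<Longrightarrow> \<bar>g v\<bar> \<le> B"
proof
  define u0 where "u0 = (lo + hi) / 2"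
  define p where "p = support_slope g \<omega> hi u0"
  have u0: "lo < u0" "u0 < hi" using assms by (auto simp: u0_def)
  fix v assume v: "v \<in> {lo..hi}"
  have "\<bar>p * (v - u0)\<bar> \<le> \<bar>p\<bar> * (hi - lo)"
    unfolding abs_mult using v u0 by (intro mult_left_mono) auto
  moreover have "\<bar>v - u0\<bar> \<le> hi - lo" using v u0 by auto
  then have "\<bar>v - u0\<bar> * \<omega> (2 * \<bar>v - u0\<bar>) \<le> (hi - lo) * \<omega> (2 * (hi - lo))"
    using nonneg[of "2 * \<bar>v - u0\<bar>"] mono_onD[OF mono, of "2 * \<bar>v - u0\<bar>" "2 * (hi - lo)"]
    by (intro mult_mono) auto
  ultimately have "g u0 - \<bar>p\<bar> * (hi - lo) - (hi - lo) * \<omega> (2 * (hi - lo)) \<le> g v"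
    using support_line_le[OF u0 v] unfolding p_def by (auto simp: abs_le_iff)
  then show "\<bar>g v\<bar> \<le> \<bar>g u0 - \<bar>p\<bar> * (hi - lo) - (hi - lo) * \<omega> (2 * (hi - lo))\<bar>
      + \<bar>\<bar>g lo\<bar> + \<bar>g hi\<bar> + (hi - lo) * \<omega> (hi - lo)\<bar>"
    using le_endpoint_values[OF v] by linarith
qed

end

section \<open>The separately convex extension\<close>

lemma neg_mult_shifted_le: "- ((x - u0) * (y - u0)) \<le> (x - y)\<^sup>2" for x y u0 :: real
proof -
  have "(x - u0) * (y - u0) = ((x + y) / 2 - u0)\<^sup>2 - (x - y)\<^sup>2 / 4"
    by (simp add: power2_eq_square field_simps)
  then show ?thesis
    using zero_le_power2[of "(x + y) / 2 - u0"] zero_le_power2[of "x - y"] by linarith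
qed

text \<open>\<open>\<omega> n\<close> is a modulus for \<open>g\<close> on \<open>[-(n+2), n+2]\<close>; a point \<open>u0\<close> is treated at level
  \<open>\<lceil>\<bar>u0\<bar>\<rceil>\<close>, which leaves room for the difference quotients at \<open>u0 \<plusminus> 1\<close>.\<close>
locale locally_dini_semiconvex =
  fixes g :: "real \<Rightarrow> real" and \<omega> :: "nat \<Rightarrow> real \<Rightarrow> real"
  assumes dini_modulus: "\<And>n. dini_modulus (\<omega> n)"
    and semiconvex: "\<And>n. semi_convex_on {- (real n + 2)..real n + 2} (\<omega> n) g"
begin

lemma semiconvex_interval: "semiconvex_interval g (\<omega> n) (- (real n + 2)) (real n + 2)"
  using dini_modulus[of n] semiconvex[of n] by (simp add: semiconvex_interval_def dini_modulus_def)

lemma modulus_nonneg: "0 \<le> t \<Longrightarrow> 0 \<le> \<omega> n t"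
  using dini_modulus[of n] by (simp add: dini_modulus_def)

lemma modulus_mono: "0 \<le> s \<Longrightarrow> s \<le> t \<Longrightarrow> \<omega> n s \<le> \<omega> n t"
  using dini_modulus.mono_le[OF dini_modulus] .

definition level :: "real \<Rightarrow> nat" where
  "level u = nat \<lceil>\<bar>u\<bar>\<rceil>"

lemma abs_le_level: "\<bar>u\<bar> \<le> real (level u)"
  unfolding level_def by linarith

lemma level_less: "real (level u) < \<bar>u\<bar> + 1"
  unfolding level_def by linarith

definition g_bound :: "nat \<Rightarrow> real" where
  "g_bound n = (SUP v\<in>{- real n..real n}. \<bar>g v\<bar>)"

lemma bdd_above_abs_g: "bdd_above ((\<lambda>v. \<bar>g v\<bar>) ` {- real n..real n})"
proof -
  obtain B where "\<And>v. v \<in> {- (real n + 2)..real n + 2} \<Longrightarrow> \<bar>g v\<bar> \<le> B"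
    using semiconvex_interval.bounded_on_interval[OF semiconvex_interval, of n] by force
  then show ?thesis by (intro bdd_aboveI2[of _ _ B]) auto
qed

lemma abs_g_le_g_bound: "\<bar>v\<bar> \<le> real n \<Longrightarrow> \<bar>g v\<bar> \<le> g_bound n"
  unfolding g_bound_def by (rule cSUP_upper[OF _ bdd_above_abs_g]) auto

lemma g_bound_mono: "m \<le> n \<Longrightarrow> g_bound m \<le> g_bound n"
  unfolding g_bound_def by (rule cSUP_subset_mono[OF _ bdd_above_abs_g]) auto

lemma g_bound_nonneg: "0 \<le> g_bound n"
  using abs_g_le_g_bound[of 0 n] by simp

definition level_const :: "nat \<Rightarrow> real" where
  "level_const n = g_bound (n + 1) + (\<Sum>i\<le>n. \<omega> i 2 + \<omega> i (4 * real i + 8) + dini_sum (\<omega> i))"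

lemma level_const_terms_nonneg: "0 \<le> \<omega> i 2 + \<omega> i (4 * real i + 8) + dini_sum (\<omega> i)"
  using modulus_nonneg[of 2 i] modulus_nonneg[of "4 * real i + 8" i]
    dini_modulus.dini_sum_nonneg[OF dini_modulus, of i]
  by simp

lemma level_const_mono: "m \<le> n \<Longrightarrow> level_const m \<le> level_const n"
  unfolding level_const_def
  by (intro add_mono g_bound_mono sum_mono2 level_const_terms_nonneg) auto

lemma level_const_nonneg: "0 \<le> level_const n"
  unfolding level_const_def by (intro add_nonneg_nonneg g_bound_nonneg sum_nonneg level_const_terms_nonneg)

lemma le_level_const:
  "g_bound (n + 1) \<le> level_const n" "\<omega> n 2 \<le> level_const n"
  "\<omega> n (4 * real n + 8) \<le> level_const n" "dini_sum (\<omega> n) \<le> level_const n"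
proof -
  have "\<omega> n 2 + \<omega> n (4 * real n + 8) + dini_sum (\<omega> n) \<le> (\<Sum>i\<le>n. \<omega> i 2 + \<omega> i (4 * real i + 8) + dini_sum (\<omega> i))"
    by (rule member_le_sum) (auto intro: level_const_terms_nonneg)
  then show "g_bound (n + 1) \<le> level_const n" "\<omega> n 2 \<le> level_const n"
    "\<omega> n (4 * real n + 8) \<le> level_const n" "dini_sum (\<omega> n) \<le> level_const n"
    using g_bound_nonneg[of "n + 1"] modulus_nonneg[of 2 n] modulus_nonneg[of "4 * real n + 8" n]
      dini_modulus.dini_sum_nonneg[OF dini_modulus, of n] level_const_terms_nonneg[of n]
    unfolding level_const_def by linarith+
qed

definition slope :: "real \<Rightarrow> real" where
  "slope u0 = support_slope g (\<omega> (level u0)) (real (level u0) + 2) u0"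

lemma abs_slope_le: "\<bar>slope u0\<bar> \<le> 3 * level_const (level u0)"
proof -
  define n where "n = level u0"
  have u0: "- (real n + 2) < u0" "u0 < real n + 2" "\<bar>u0\<bar> \<le> real n"
    using abs_le_level[of u0] unfolding n_def by auto
  have g: "\<bar>g v\<bar> \<le> level_const n" if "\<bar>v\<bar> \<le> real n + 1" for v
    using abs_g_le_g_bound[of v "n + 1"] that le_level_const(1)[of n] by simp
  have "slope u0 \<le> g (u0 + 1) - g u0 + \<omega> n 2"
    using semiconvex_interval.support_slope_le[OF semiconvex_interval u0(1,2), of 1] u0(3)
    by (simp add: slope_def n_def)
  moreover have "g u0 - g (u0 - 1) - \<omega> n 2 \<le> slope u0"
    using semiconvex_interval.support_slope_ge[OF semiconvex_interval u0(1,2), of 1] u0(3)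
    by (simp add: slope_def n_def)
  ultimately show ?thesis
    using g[of "u0 + 1"] g[of u0] g[of "u0 - 1"] u0(3) le_level_const(2)[of n]
    unfolding n_def[symmetric] by (simp add: abs_le_iff)
qed

definition local_part :: "real \<Rightarrow> real \<Rightarrow> real \<Rightarrow> real" where
  "local_part u0 x y = g u0 + slope u0 * ((x + y) / 2 - u0) + dini_kernel (\<omega> (level u0)) (x - u0) (y - u0)
     - \<omega> (level u0) (4 * real (level u0) + 8) * ((x - u0) * (y - u0))"

lemma convex_local_part: "convex_on UNIV (\<lambda>x. local_part u0 x y)"
proof -
  define n where "n = level u0"
  have "local_part u0 x y = (slope u0 / 2 - \<omega> n (4 * real n + 8) * (y - u0)) * x
      + (g u0 + slope u0 * (y / 2 - u0) + \<omega> n (4 * real n + 8) * u0 * (y - u0))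
      + dini_kernel (\<omega> n) (1 *\<^sub>R x + (- u0)) (y - u0)" for x
    unfolding local_part_def n_def by (simp add: algebra_simps add_divide_distrib)
  then show ?thesis
    using convex_on_compose_affine[OF dini_modulus.convex_dini_kernel[OF dini_modulus]]
    by (simp only:) (intro convex_on_add convex_on_affine_real)
qed

lemma local_part_commute: "local_part u0 x y = local_part u0 y x"
  using dini_modulus.dini_kernel_commute[OF dini_modulus]
  by (simp add: local_part_def algebra_simps)

lemma local_part_self: "local_part u u u = g u"
  by (simp add: local_part_def dini_modulus.dini_kernel_0[OF dini_modulus])

lemma local_part_diag:
  "local_part u0 u u = g u0 + slope u0 * (u - u0) + dini_kernel (\<omega> (level u0)) (u - u0) (u - u0)
     - \<omega> (level u0) (4 * real (level u0) + 8) * (u - u0)\<^sup>2"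
  by (simp add: local_part_def power2_eq_square)

lemma local_part_diag_le_tangent: "local_part u0 u u \<le> g u0 + slope u0 * (u - u0)"
proof -
  have "0 \<le> \<omega> (level u0) (4 * real (level u0) + 8) * (u - u0)\<^sup>2"
    by (simp add: modulus_nonneg)
  then show ?thesis
    using dini_modulus.dini_kernel_diag_nonpos[OF dini_modulus] unfolding local_part_diag
    by (smt (verit))
qed

text \<open>Near \<open>u0\<close> the semi-convexity error is absorbed by the Dini kernel when \<open>\<bar>u - u0\<bar> \<le> 1\<close>,
  and by the quadratic term otherwise.\<close>
lemma local_part_diag_le:
  assumes "\<bar>u\<bar> \<le> real (level u0) + 2"
  shows "local_part u0 u u \<le> g u"
proof -
  define n where "n = level u0"
  define t where "t = u - u0"
  have u0: "- (real n + 2) < u0" "u0 < real n + 2" "\<bar>u0\<bar> \<le> real n"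
    using abs_le_level[of u0] unfolding n_def by auto
  have "g u0 + slope u0 * t - \<bar>t\<bar> * \<omega> n (2 * \<bar>t\<bar>) \<le> g u"
    using semiconvex_interval.support_line_le[OF semiconvex_interval u0(1,2), of u] assms
    by (simp add: slope_def n_def t_def abs_le_iff)
  moreover have "dini_kernel (\<omega> n) t t - \<omega> n (4 * real n + 8) * t\<^sup>2 \<le> - \<bar>t\<bar> * \<omega> n (2 * \<bar>t\<bar>)"
  proof (cases "\<bar>t\<bar> \<le> 1")
    case True
    have "0 \<le> \<omega> n (4 * real n + 8) * t\<^sup>2" by (simp add: modulus_nonneg)
    then show ?thesis
      using dini_modulus.dini_kernel_diag_le[OF dini_modulus True, of n] by linarith
  next
    case False
    have "\<bar>t\<bar> \<le> 2 * real n + 2" using assms u0(3) by (simp add: t_def n_def)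
    then have "\<omega> n (2 * \<bar>t\<bar>) \<le> \<omega> n (4 * real n + 8)" by (intro modulus_mono) auto
    then have "\<bar>t\<bar> * \<omega> n (2 * \<bar>t\<bar>) \<le> \<bar>t\<bar> * \<omega> n (4 * real n + 8)"
      by (simp add: mult_left_mono)
    also have "\<dots> \<le> \<bar>t\<bar> * \<bar>t\<bar> * \<omega> n (4 * real n + 8)"
      using False mult_left_mono[of 1 "\<bar>t\<bar>" "\<bar>t\<bar>"] modulus_nonneg[of "4 * real n + 8" n]
      by (intro mult_right_mono) auto
    finally show ?thesis
      using dini_modulus.dini_kernel_diag_nonpos[OF dini_modulus, of n t]
      by (simp add: power2_eq_square mult.commute)
  qed
  ultimately show ?thesis
    unfolding local_part_diag n_def[symmetric] t_def[symmetric] by linarith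
qed

lemma local_part_le:
  "local_part u0 x y \<le> level_const (level u0)
     * (3 + 3 * real (level u0) + 3 * \<bar>(x + y) / 2\<bar> + 4 * \<bar>x - y\<bar> + (x - y)\<^sup>2)"
proof -
  define n where "n = level u0"
  define m where "m = (x + y) / 2"
  define L where "L = level_const n"
  have L: "0 \<le> L" by (simp add: L_def level_const_nonneg)
  have g_le: "g u0 \<le> L"
    using abs_g_le_g_bound[of u0 "n + 1"] abs_le_level[of u0] le_level_const(1)[of n]
    by (simp add: L_def n_def)
  have slope_le: "slope u0 * (m - u0) \<le> 3 * L * (\<bar>m\<bar> + real n)"
  proof -
    have "slope u0 * (m - u0) \<le> \<bar>slope u0\<bar> * \<bar>m - u0\<bar>" by (simp add: abs_mult[symmetric])
    also have "\<dots> \<le> 3 * L * (\<bar>m\<bar> + real n)"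
      using abs_slope_le[of u0] abs_le_level[of u0] L unfolding L_def n_def
      by (intro mult_mono) auto
    finally show ?thesis .
  qed
  have "dini_kernel (\<omega> n) (x - u0) (y - u0) \<le> (2 + 4 * \<bar>x - y\<bar>) * dini_sum (\<omega> n)"
    using dini_modulus.dini_kernel_le[OF dini_modulus, of n "x - u0" "y - u0"] by simp
  also have "\<dots> \<le> (2 + 4 * \<bar>x - y\<bar>) * L"
    unfolding L_def using le_level_const(4)[of n] by (intro mult_left_mono) auto
  finally have dini_le: "dini_kernel (\<omega> n) (x - u0) (y - u0) \<le> (2 + 4 * \<bar>x - y\<bar>) * L" .
  have quadratic_le: "- (\<omega> n (4 * real n + 8) * ((x - u0) * (y - u0))) \<le> L * (x - y)\<^sup>2"
  proof -
    have "\<omega> n (4 * real n + 8) * - ((x - u0) * (y - u0)) \<le> \<omega> n (4 * real n + 8) * (x - y)\<^sup>2"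
      using neg_mult_shifted_le by (intro mult_left_mono) (simp_all add: modulus_nonneg)
    also have "\<dots> \<le> L * (x - y)\<^sup>2"
      unfolding L_def using le_level_const(3)[of n] by (intro mult_right_mono) auto
    finally show ?thesis by simp
  qed
  have "local_part u0 x y = g u0 + slope u0 * (m - u0) + dini_kernel (\<omega> n) (x - u0) (y - u0)
      - \<omega> n (4 * real n + 8) * ((x - u0) * (y - u0))"
    by (simp add: local_part_def n_def m_def)
  moreover have "L * (3 + 3 * real n + 3 * \<bar>m\<bar> + 4 * \<bar>x - y\<bar> + (x - y)\<^sup>2)
      = L + 3 * L * (\<bar>m\<bar> + real n) + (2 + 4 * \<bar>x - y\<bar>) * L + L * (x - y)\<^sup>2"
    by (simp add: algebra_simps)
  ultimately show ?thesis
    unfolding n_def[symmetric] m_def[symmetric] L_def[symmetric] using g_le slope_le dini_le quadratic_le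
    by linarith
qed

definition hinge_weight :: "nat \<Rightarrow> real" where
  "hinge_weight K = 11 * (real K + 1) * level_const (K + 2)"

lemma hinge_weight_nonneg: "0 \<le> hinge_weight K"
  by (simp add: hinge_weight_def level_const_nonneg)

lemma tangent_gap_le_hinge_weight:
  assumes "level u0 + 1 \<le> K" "\<bar>u\<bar> \<le> real K + 2"
  shows "g u0 + slope u0 * (u - u0) - g u \<le> hinge_weight K"
proof -
  define L where "L = level_const (K + 2)"
  have L: "0 \<le> L" by (simp add: L_def level_const_nonneg)
  have "\<bar>u0\<bar> \<le> real K" using abs_le_level[of u0] assms(1) by linarith
  then have "\<bar>g u0\<bar> \<le> L"
    using abs_g_le_g_bound[of u0 "K + 2"] le_level_const(1)[of "K + 2"] g_bound_mono[of "K + 2" "K + 2 + 1"]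
    by (simp add: L_def)
  moreover have "\<bar>g u\<bar> \<le> L"
    using abs_g_le_g_bound[of u "K + 2"] assms(2) le_level_const(1)[of "K + 2"] g_bound_mono[of "K + 2" "K + 2 + 1"]
    by (simp add: L_def)
  moreover have "slope u0 * (u - u0) \<le> 3 * L * (2 * real K + 2)"
  proof -
    have "slope u0 * (u - u0) \<le> \<bar>slope u0\<bar> * \<bar>u - u0\<bar>" by (simp add: abs_mult[symmetric])
    also have "\<dots> \<le> 3 * L * (2 * real K + 2)"
      using abs_slope_le[of u0] level_const_mono[of "level u0" "K + 2"] assms \<open>\<bar>u0\<bar> \<le> real K\<close> L
      unfolding L_def by (intro mult_mono) auto
    finally show ?thesis .
  qed
  moreover have "L * (6 * real K + 8) \<le> L * (11 * (real K + 1))"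
    using L by (intro mult_left_mono) auto
  then have "L + 3 * L * (2 * real K + 2) + L \<le> hinge_weight K"
    by (simp add: hinge_weight_def L_def algebra_simps)
  ultimately show ?thesis by (simp add: abs_le_iff)
qed

lemma local_bound_le_hinge_weight:
  assumes "\<bar>m\<bar> \<le> real K" "\<bar>d\<bar> \<le> real K" "d\<^sup>2 \<le> real K"
  shows "level_const (K + 2) * (3 + 3 * real (K + 2) + 3 * \<bar>m\<bar> + 4 * \<bar>d\<bar> + d\<^sup>2) \<le> hinge_weight K"
proof -
  have "3 + 3 * real (K + 2) + 3 * \<bar>m\<bar> + 4 * \<bar>d\<bar> + d\<^sup>2 \<le> 11 * (real K + 1)"
    using assms by simp
  then show ?thesis
    unfolding hinge_weight_def using level_const_nonneg[of "K + 2"]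
    by (simp add: mult_left_mono mult.commute)
qed

definition support :: "real \<Rightarrow> real \<Rightarrow> real \<Rightarrow> real" where
  "support u0 x y = local_part u0 x y + hinge_kernel_series hinge_weight x y
     + hinge_series hinge_weight u0 + hinge_series_deriv hinge_weight u0 * ((x + y) / 2 - u0)"

lemma support_eq_bregman:
  "support u0 x y = local_part u0 x y + hinge_kernel_series hinge_weight x y + hinge_series hinge_weight ((x + y) / 2)
     - bregman (hinge_series hinge_weight) (hinge_series_deriv hinge_weight) ((x + y) / 2) u0"
  by (simp add: support_def bregman_def)

lemma convex_support: "convex_on UNIV (\<lambda>x. support u0 x y)"
proof -
  have "support u0 x y = local_part u0 x y + hinge_kernel_series hinge_weight x y
      + (hinge_series_deriv hinge_weight u0 / 2 * x
         + (hinge_series hinge_weight u0 + hinge_series_deriv hinge_weight u0 * (y / 2 - u0)))" for x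
    by (simp add: support_def algebra_simps add_divide_distrib)
  then show ?thesis
    by (simp only:) (intro convex_on_add convex_local_part convex_hinge_kernel_series
        hinge_weight_nonneg convex_on_affine_real)
qed

lemma support_commute: "support u0 x y = support u0 y x"
  by (simp add: support_def local_part_commute hinge_kernel_series_commute add.commute)

lemma support_self: "support u u u = g u"
  by (simp add: support_def local_part_self hinge_kernel_series_diag)

lemma support_diag_le: "support u0 u u \<le> g u"
proof -
  have diag: "support u0 u u = local_part u0 u u
      - bregman (hinge_series hinge_weight) (hinge_series_deriv hinge_weight) u u0"
    by (simp add: support_eq_bregman hinge_kernel_series_diag)
  show ?thesis
  proof (cases "\<bar>u\<bar> \<le> real (level u0) + 2")
    case True
    then show ?thesis
      using diag local_part_diag_le[OF True]
        bregman_hinge_series_nonneg[where c = hinge_weight, OF hinge_weight_nonneg, of u u0]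
      by linarith
  next
    case False
    define K where "K = nat \<lceil>\<bar>u\<bar>\<rceil> - 2"
    have K: "level u0 + 1 \<le> K" "real K + 1 \<le> \<bar>u\<bar>" "\<bar>u\<bar> \<le> real K + 2"
      using False unfolding K_def by linarith+
    have "hinge_weight K * 1 \<le> hinge_weight K * bregman (hinge_sq K) (hinge_sq_deriv K) u u0"
      using K abs_le_level[of u0]
      by (intro mult_left_mono hinge_weight_nonneg bregman_hinge_sq_outward) auto
    also have "\<dots> \<le> bregman (hinge_series hinge_weight) (hinge_series_deriv hinge_weight) u u0"
      by (rule bregman_hinge_series_ge[where c = hinge_weight, OF hinge_weight_nonneg])
    finally show ?thesis
      using diag local_part_diag_le_tangent[of u0 u] tangent_gap_le_hinge_weight[OF K(1,3)] by simp
  qed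
qed

lemma local_part_le_bregman:
  assumes "level u0 = K + 2" "\<bar>(x + y) / 2\<bar> \<le> real K" "\<bar>x - y\<bar> \<le> real K" "(x - y)\<^sup>2 \<le> real K"
  shows "local_part u0 x y \<le> bregman (hinge_series hinge_weight) (hinge_series_deriv hinge_weight) ((x + y) / 2) u0"
proof -
  have "real K + 1 \<le> \<bar>u0\<bar>" using level_less[of u0] assms(1) by simp
  then have "hinge_weight K * 1
      \<le> hinge_weight K * bregman (hinge_sq K) (hinge_sq_deriv K) ((x + y) / 2) u0"
    using assms(2) by (intro mult_left_mono hinge_weight_nonneg bregman_hinge_sq_inward) auto
  also have "\<dots> \<le> bregman (hinge_series hinge_weight) (hinge_series_deriv hinge_weight) ((x + y) / 2) u0"
    by (rule bregman_hinge_series_ge[where c = hinge_weight, OF hinge_weight_nonneg])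
  finally show ?thesis
    using local_part_le[of u0 x y] local_bound_le_hinge_weight[OF assms(2-4)] assms(1) by simp
qed

text \<open>Far from the midpoint of \<open>x, y\<close> the Bregman divergence of the hinge series dominates the
  local part, so the family is bounded above.\<close>
lemma support_bounded: "\<exists>M. \<forall>u0. support u0 x y \<le> M"
proof -
  define m where "m = (x + y) / 2"
  define a where "a = \<bar>m\<bar> + \<bar>x - y\<bar> + (x - y)\<^sup>2"
  define R where "R = nat \<lceil>a\<rceil> + 2"
  define E where "E n = level_const n * (3 + 3 * real n + 3 * \<bar>m\<bar> + 4 * \<bar>x - y\<bar> + (x - y)\<^sup>2)" for n
  have "support u0 x y \<le> hinge_kernel_series hinge_weight x y + hinge_series hinge_weight m + E R" for u0
  proof -
    define B where "B = bregman (hinge_series hinge_weight) (hinge_series_deriv hinge_weight) m u0"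
    have eq: "support u0 x y = local_part u0 x y + hinge_kernel_series hinge_weight x y
        + hinge_series hinge_weight m - B"
      by (simp add: support_eq_bregman m_def B_def)
    have "0 \<le> E R" unfolding E_def using level_const_nonneg[of R] by simp
    show ?thesis
    proof (cases "level u0 \<le> R")
      case True
      then have "E (level u0) \<le> E R"
        unfolding E_def using level_const_mono[OF True] level_const_nonneg[of "level u0"]
        by (intro mult_mono) auto
      then show ?thesis
        using eq local_part_le[of u0 x y]
          bregman_hinge_series_nonneg[where c = hinge_weight, OF hinge_weight_nonneg, of m u0]
        by (simp add: B_def E_def m_def)
    next
      case False
      then have "nat \<lceil>a\<rceil> \<le> level u0 - 2" unfolding R_def by linarith
      then have "a \<le> real (level u0 - 2)" using real_nat_ceiling_ge[of a] of_nat_mono by fastforce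
      then have "\<bar>m\<bar> \<le> real (level u0 - 2)" "\<bar>x - y\<bar> \<le> real (level u0 - 2)"
        "(x - y)\<^sup>2 \<le> real (level u0 - 2)"
        using zero_le_power2[of "x - y"] unfolding a_def by linarith+
      moreover have "level u0 = level u0 - 2 + 2" using False unfolding R_def by simp
      ultimately have "local_part u0 x y \<le> B"
        unfolding B_def m_def by (intro local_part_le_bregman)
      then show ?thesis using eq \<open>0 \<le> E R\<close> by linarith
    qed
  qed
  then show ?thesis by blast
qed

theorem separately_convex_extension: "\<exists>f. separately_convex f \<and> (\<forall>u. f (u, u) = g u)"
proof (intro exI conjI allI)
  show "separately_convex (\<lambda>(x, y). SUP u0. support u0 x y)"
    using support_bounded
    by (intro separately_convex_supremum convex_support support_commute) (auto simp: bdd_above_def)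
  have "(SUP u0. support u0 u u) = g u" for u
  proof (rule cSup_eq_maximum)
    show "g u \<in> range (\<lambda>u0. support u0 u u)" using support_self[of u] by (metis rangeI)
  qed (auto intro: support_diag_le)
  then show "(\<lambda>(x, y). SUP u0. support u0 x y) (u, u) = g u" for u
    by simp
qed

end

theorem corollary7p4:
  fixes g :: "real \<Rightarrow> real"
  assumes "\<And>I. is_interval I \<Longrightarrow> bounded I \<Longrightarrow>
             \<exists>\<omega>. modulus \<omega>
                 \<and> set_nn_integral lborel {0<..<1} (\<lambda>t. ennreal (\<omega> t / t)) < \<infinity>
                 \<and> semi_convex_on I \<omega> g"
  shows "\<exists>f :: real \<times> real \<Rightarrow> real. separately_convex f \<and> (\<forall>u. f (u, u) = g u)"
proof -
  have "\<forall>n::nat. \<exists>\<omega>. dini_modulus \<omega> \<and> semi_convex_on {- (real n + 2)..real n + 2} \<omega> g"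
  proof
    fix n :: nat
    obtain \<omega> where "modulus \<omega>" "set_nn_integral lborel {0<..<1} (\<lambda>t. ennreal (\<omega> t / t)) < \<infinity>"
      "semi_convex_on {- (real n + 2)..real n + 2} \<omega> g"
      using assms[of "{- (real n + 2)..real n + 2}"] by auto
    then show "\<exists>\<omega>. dini_modulus \<omega> \<and> semi_convex_on {- (real n + 2)..real n + 2} \<omega> g"
      by (auto simp: dini_modulus_def modulus_def)
  qed
  then obtain \<omega> where "\<And>n. dini_modulus (\<omega> n)" "\<And>n. semi_convex_on {- (real n + 2)..real n + 2} (\<omega> n) g"
    by metis
  then interpret locally_dini_semiconvex g \<omega>
    by (simp add: locally_dini_semiconvex_def)
  show ?thesis by (rule separately_convex_extension)
qed

end
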